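(* Under the hypotheses of Theorem 7.3 (positive integers $a,d,r,h,n$, $r\geq 2$, $\gcd(a,d)=\gcd(a,r)=1$, $d>hn(r-1)$, $a_0=a$, $a_{k+1}=ha+r^kd$ for $0\leq k\leq n$, $\{a_0,\dots,a_{n+1}\}$ minimally generating $\mathfrak{S}_{n+2}$), every nonzero element $\omega(i)=\ell_iha+id$ ($1\leq i\leq a-1$) of $\mathrm{Ap}(\mathfrak{S}_{n+2},a)$ has a unique expression $\omega(i)=\sum_{k=0}^{n}c_{k+1}a_{k+1}$ with $c_{k+1}\in\mathbb{N}$; namely $(c_1,\dots,c_{n+1})$ is the digit vector of the $r$-adic representation of $i$ up to order $n$.
   Context: The $r$-adic representation of $i$ up to order $n$ is the unique expression $i=\sum_{k=0}^{n}\alpha_kr^k$ with nonnegative integers $\alpha_k$, $0\leq\alpha_k\leq r-1$ for $k\leq n-1$ and $\alpha_n$ unrestricted; $\ell_i=\sum_k\alpha_k$. *)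

theory Defs
  imports Main
begin

definition radic_digit :: "nat \<Rightarrow> nat \<Rightarrow> nat \<Rightarrow> nat \<Rightarrow> nat" where
  "radic_digit r n i k = (if k < n then (i div r ^ k) mod r else i div r ^ n)"

definition radic_len :: "nat \<Rightarrow> nat \<Rightarrow> nat \<Rightarrow> nat" where
  "radic_len r n i = (\<Sum>k\<le>n. radic_digit r n i k)"

definition gen :: "nat \<Rightarrow> nat \<Rightarrow> nat \<Rightarrow> nat \<Rightarrow> nat \<Rightarrow> nat" where
  "gen a h r d j = (if j = 0 then a else h * a + r ^ (j - 1) * d)"

definition span_idx :: "(nat \<Rightarrow> nat) \<Rightarrow> nat set \<Rightarrow> nat set" where
  "span_idx g I = {s. \<exists>c :: nat \<Rightarrow> nat. s = (\<Sum>j\<in>I. c j * g j)}"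

definition minimal_gens :: "(nat \<Rightarrow> nat) \<Rightarrow> nat set \<Rightarrow> bool" where
  "minimal_gens g I = (\<forall>j\<in>I. g j \<notin> span_idx g (I - {j}))"

end

theory Submission
  imports Defs "HOL-Number_Theory.Cong"
begin

text \<open>Writing \<open>C = \<Sum> c\<^sub>k\<^sub>+\<^sub>1\<close> and \<open>J = \<Sum> c\<^sub>k\<^sub>+\<^sub>1 r\<^sup>k\<close>, a representation of
  \<open>\<omega>(i) = \<ell>\<^sub>i h a + i d\<close> reads \<open>C h a + J d = \<ell>\<^sub>i h a + i d\<close>. Since \<open>gcd a d = 1\<close>, \<open>J \<equiv> i (mod a)\<close>.
  Among all \<open>c\<close> with value \<open>J\<close> the digit sum is minimised exactly by the \<open>r\<close>-adic digits of
  \<open>J\<close> (carrying \<open>r\<close> units of one place into the next lowers the sum by \<open>r - 1\<close>).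
  \<open>J < i\<close> is impossible as \<open>0 < i < a\<close>; \<open>J > i\<close> forces \<open>J \<ge> i + a\<close>, so \<open>\<ell>\<^sub>i - C\<close> would
  exceed \<open>d / h > n (r - 1)\<close>, whereas \<open>\<ell>\<^sub>i \<le> n (r - 1) + C\<close>. Hence \<open>J = i\<close>, \<open>C = \<ell>\<^sub>i\<close>, and
  minimality gives \<open>c = \<alpha>\<close>.\<close>

lemma radic_digit_Suc_0: "radic_digit r (Suc n) J 0 = J mod r"
  by (simp add: radic_digit_def)

lemma radic_digit_Suc_Suc: "radic_digit r (Suc n) J (Suc k) = radic_digit r n (J div r) k"
  by (simp add: radic_digit_def div_mult2_eq)

lemma radic_len_Suc: "radic_len r (Suc n) J = J mod r + radic_len r n (J div r)"
  unfolding radic_len_def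
  by (simp add: sum.atMost_Suc_shift radic_digit_Suc_0 radic_digit_Suc_Suc del: sum.atMost_Suc)

lemma sum_atMost_Suc_mult_power:
  fixes c :: "nat \<Rightarrow> nat"
  shows "(\<Sum>k\<le>Suc n. c k * r ^ k) = c 0 + r * (\<Sum>k\<le>n. c (Suc k) * r ^ k)"
  by (simp add: sum.atMost_Suc_shift sum_distrib_left mult.left_commute del: sum.atMost_Suc)

lemma sum_radic_digit_mult_power: "(\<Sum>k\<le>n. radic_digit r n J k * r ^ k) = J"
proof (induction n arbitrary: J)
  case 0
  then show ?case by (simp add: radic_digit_def)
next
  case (Suc n)
  then show ?case
    by (simp only: sum_atMost_Suc_mult_power radic_digit_Suc_0 radic_digit_Suc_Suc)
       (simp add: mult.commute)
qed

lemma radic_len_le_div_power: "r > 0 \<Longrightarrow> radic_len r n i \<le> n * (r - 1) + i div r ^ n"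
proof -
  assume "r > 0"
  have "radic_len r n i = (\<Sum>k<n. radic_digit r n i k) + i div r ^ n"
    unfolding radic_len_def by (simp add: lessThan_Suc_atMost[symmetric] radic_digit_def)
  also have "(\<Sum>k<n. radic_digit r n i k) \<le> (\<Sum>k<n. r - 1)"
    by (rule sum_mono) (use \<open>r > 0\<close> in \<open>simp add: radic_digit_def less_Suc_eq_le[symmetric]\<close>)
  finally show ?thesis by simp
qed

lemma div_power_le_radic_len: "J div r ^ n \<le> radic_len r n J"
proof -
  have "radic_digit r n J n \<le> radic_len r n J"
    unfolding radic_len_def by (rule member_le_sum) auto
  then show ?thesis by (simp add: radic_digit_def)
qed

lemma mod_add_div_le_self:
  fixes m r :: nat
  assumes "r \<ge> 2"
  shows "m mod r + m div r \<le> m" and "m mod r + m div r = m \<Longrightarrow> m div r = 0"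
proof -
  have "2 * (m div r) \<le> r * (m div r)" and "m = r * (m div r) + m mod r"
    using assms by simp_all
  then show "m mod r + m div r \<le> m" and "m mod r + m div r = m \<Longrightarrow> m div r = 0"
    by linarith+
qed

text \<open>Carry from place 0 to place 1, then shift down one place, discarding the remainder
  \<open>c 0 mod r\<close>.\<close>
definition carry :: "nat \<Rightarrow> (nat \<Rightarrow> nat) \<Rightarrow> nat \<Rightarrow> nat" where
  "carry r c k = c (Suc k) + (if k = 0 then c 0 div r else 0)"

lemma sum_carry: "(\<Sum>k\<le>n. carry r c k) = c 0 div r + (\<Sum>k\<le>n. c (Suc k))"
  by (simp add: carry_def sum.distrib)

lemma sum_carry_mult_power:
  assumes "r > 0"
  shows "(\<Sum>k\<le>n. carry r c k * r ^ k) = (\<Sum>k\<le>Suc n. c k * r ^ k) div r"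
  and "(\<Sum>k\<le>Suc n. c k * r ^ k) mod r = c 0 mod r"
proof -
  have "(\<Sum>k\<le>n. carry r c k * r ^ k) = c 0 div r + (\<Sum>k\<le>n. c (Suc k) * r ^ k)"
  proof -
    have "carry r c k * r ^ k = c (Suc k) * r ^ k + (if k = 0 then c 0 div r else 0)" for k
      by (simp add: carry_def distrib_right)
    then show ?thesis by (simp add: sum.distrib)
  qed
  then show "(\<Sum>k\<le>n. carry r c k * r ^ k) = (\<Sum>k\<le>Suc n. c k * r ^ k) div r"
    and "(\<Sum>k\<le>Suc n. c k * r ^ k) mod r = c 0 mod r"
    unfolding sum_atMost_Suc_mult_power using assms by simp_all
qed

lemma radic_len_le_digit_sum:
  assumes "r \<ge> 2"
  shows "radic_len r n (\<Sum>k\<le>n. c k * r ^ k) \<le> (\<Sum>k\<le>n. c k)"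
proof (induction n arbitrary: c)
  case 0
  then show ?case by (simp add: radic_len_def radic_digit_def)
next
  case (Suc n)
  let ?J = "\<Sum>k\<le>Suc n. c k * r ^ k"
  have "radic_len r (Suc n) ?J = c 0 mod r + radic_len r n (\<Sum>k\<le>n. carry r c k * r ^ k)"
    using assms by (simp only: radic_len_Suc sum_carry_mult_power)
  also have "\<dots> \<le> c 0 mod r + c 0 div r + (\<Sum>k\<le>n. c (Suc k))"
    using Suc.IH[of "carry r c"] by (simp add: sum_carry)
  also have "\<dots> \<le> (\<Sum>k\<le>Suc n. c k)"
    using mod_add_div_le_self(1)[OF assms, of "c 0"]
    by (simp add: sum.atMost_Suc_shift del: sum.atMost_Suc)
  finally show ?case .
qed

lemma digit_sum_eq_radic_len_imp_radic_digit:
  assumes "r \<ge> 2"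
    and "(\<Sum>k\<le>n. c k) = radic_len r n (\<Sum>k\<le>n. c k * r ^ k)" and "k \<le> n"
  shows "c k = radic_digit r n (\<Sum>k\<le>n. c k * r ^ k) k"
  using assms(2,3)
proof (induction n arbitrary: c k)
  case 0
  then show ?case by (simp add: radic_len_def radic_digit_def)
next
  case (Suc n)
  let ?J = "\<Sum>k\<le>Suc n. c k * r ^ k" and ?J' = "\<Sum>k\<le>n. carry r c k * r ^ k"
  have J: "?J div r = ?J'" "?J mod r = c 0 mod r"
    using assms(1) sum_carry_mult_power[of r c n] by simp_all
  have "c 0 + (\<Sum>k\<le>n. c (Suc k)) = c 0 mod r + radic_len r n ?J'"
    using Suc.prems(1) J by (simp add: radic_len_Suc sum.atMost_Suc_shift del: sum.atMost_Suc)
  moreover have "radic_len r n ?J' \<le> c 0 div r + (\<Sum>k\<le>n. c (Suc k))"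
    using radic_len_le_digit_sum[OF assms(1), of n "carry r c"] by (simp add: sum_carry)
  moreover note mod_add_div_le_self[OF assms(1), of "c 0"]
  ultimately have no_carry: "c 0 div r = 0"
    and "radic_len r n ?J' = c 0 div r + (\<Sum>k\<le>n. c (Suc k))"
    by linarith+
  then have "c 0 mod r = c 0" and "(\<Sum>k\<le>n. carry r c k) = radic_len r n ?J'"
    by (auto simp: div_eq_0_iff sum_carry)
  then have IH: "carry r c m = radic_digit r n ?J' m" if "m \<le> n" for m
    using Suc.IH that by blast
  show ?case
  proof (cases k)
    case 0
    then show ?thesis using J \<open>c 0 mod r = c 0\<close> by (simp add: radic_digit_Suc_0)
  next
    case (Suc m)
    have "c k = carry r c m"
      using Suc no_carry by (simp add: carry_def)
    also have "\<dots> = radic_digit r n ?J' m"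
      using IH Suc Suc.prems(2) by simp
    also have "\<dots> = radic_digit r (Suc n) ?J k"
      by (simp only: Suc radic_digit_Suc_Suc J(1))
    finally show ?thesis .
  qed
qed

lemma radic_len_le_digit_sum_if_le:
  assumes "r \<ge> 2" and "i \<le> (\<Sum>k\<le>n. c k * r ^ k)"
  shows "radic_len r n i \<le> n * (r - 1) + (\<Sum>k\<le>n. c k)"
proof -
  let ?J = "\<Sum>k\<le>n. c k * r ^ k"
  have "radic_len r n i \<le> n * (r - 1) + i div r ^ n"
    using assms(1) radic_len_le_div_power[of r n i] by simp
  also have "i div r ^ n \<le> ?J div r ^ n"
    using assms(2) by (rule div_le_mono)
  also have "?J div r ^ n \<le> radic_len r n ?J"
    by (rule div_power_le_radic_len)
  also have "\<dots> \<le> (\<Sum>k\<le>n. c k)"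
    using assms(1) by (rule radic_len_le_digit_sum)
  finally show ?thesis by simp
qed

lemma radic_value_eq_if_weighted_eq:
  fixes a d h i :: nat
  assumes "r \<ge> 2" "coprime a d" "i < a" "d > h * n * (r - 1)"
    and eq: "(\<Sum>k\<le>n. c k) * h * a + (\<Sum>k\<le>n. c k * r ^ k) * d = radic_len r n i * h * a + i * d"
  shows "(\<Sum>k\<le>n. c k * r ^ k) = i"
proof (rule ccontr)
  let ?C = "\<Sum>k\<le>n. c k" and ?J = "\<Sum>k\<le>n. c k * r ^ k" and ?L = "radic_len r n i"
  assume "?J \<noteq> i"
  have "[?J * d = i * d] (mod a)"
    using arg_cong[OF eq, of "\<lambda>x. x mod a"] by (simp add: cong_def mod_add_left_eq[symmetric])
  then have cong: "[?J = i] (mod a)"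
    using assms(2) by (simp add: cong_mult_rcancel_nat coprime_commute)
  have "i < ?J"
    using \<open>?J \<noteq> i\<close> cong_less_imp_eq_nat[OF _ _ _ assms(3) cong] assms(3) by fastforce
  then obtain q where "?J = q * a + i" and "q \<noteq> 0"
    using cong cong_le_nat[of i ?J a] by auto
  then have "a \<le> ?J - i"
    by simp
  have "?L - ?C \<le> n * (r - 1)"
    using radic_len_le_digit_sum_if_le[OF assms(1), where i = i and n = n and c = c] \<open>i < ?J\<close> by linarith
  have "a * d \<le> (?J - i) * d"
    using \<open>a \<le> ?J - i\<close> by simp
  also have "\<dots> = (?L - ?C) * h * a"
    using eq by (simp add: diff_mult_distrib)
  also have "\<dots> \<le> n * (r - 1) * h * a"
    using \<open>?L - ?C \<le> n * (r - 1)\<close> by (intro mult_le_mono1)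
  also have "\<dots> < d * a"
    using assms(3,4) by (simp add: mult.commute)
  finally show False
    by simp
qed

lemma sum_mult_gen:
  "(\<Sum>k\<le>n. c (k+1) * gen a h r d (k+1))
    = (\<Sum>k\<le>n. c (k+1)) * h * a + (\<Sum>k\<le>n. c (k+1) * r ^ k) * d"
  by (simp add: gen_def algebra_simps sum.distrib sum_distrib_left sum_distrib_right)

theorem lemma7p4:
  fixes a d r h n :: nat
  assumes "a > 0" "d > 0" "h > 0" "n > 0" "r \<ge> 2"
    and "gcd a d = 1" "gcd a r = 1"
    and "d > h * n * (r - 1)"
    and "minimal_gens (gen a h r d) {0..n+1}"
    and "1 \<le> i" "i \<le> a - 1"
  shows "\<forall>c :: nat \<Rightarrow> nat.
           (\<Sum>k\<le>n. c (k+1) * gen a h r d (k+1)) = radic_len r n i * h * a + i * d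
           \<longleftrightarrow> (\<forall>k\<le>n. c (k+1) = radic_digit r n i k)"
proof (rule allI, rule iffI)
  fix c :: "nat \<Rightarrow> nat"
  let ?C = "\<Sum>k\<le>n. c (k+1)" and ?J = "\<Sum>k\<le>n. c (k+1) * r ^ k"
  assume "(\<Sum>k\<le>n. c (k+1) * gen a h r d (k+1)) = radic_len r n i * h * a + i * d"
  then have eq: "?C * h * a + ?J * d = radic_len r n i * h * a + i * d"
    by (simp only: sum_mult_gen)
  have "?J = i"
    using radic_value_eq_if_weighted_eq[where c = "\<lambda>k. c (k+1)", OF assms(5) _ _ assms(8) eq]
      assms(1,6,11) by (simp add: coprime_iff_gcd_eq_1)
  moreover have "?C = radic_len r n i"
    using eq \<open>?J = i\<close> assms(1,3) by simp
  ultimately show "\<forall>k\<le>n. c (k+1) = radic_digit r n i k"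
    using digit_sum_eq_radic_len_imp_radic_digit[where c = "\<lambda>k. c (k+1)" and n = n, OF assms(5)]
    by simp
next
  fix c :: "nat \<Rightarrow> nat"
  assume "\<forall>k\<le>n. c (k+1) = radic_digit r n i k"
  then have "(\<Sum>k\<le>n. c (k+1)) = radic_len r n i" and "(\<Sum>k\<le>n. c (k+1) * r ^ k) = i"
    using sum_radic_digit_mult_power[of r n i] by (simp_all add: radic_len_def)
  then show "(\<Sum>k\<le>n. c (k+1) * gen a h r d (k+1)) = radic_len r n i * h * a + i * d"
    unfolding sum_mult_gen by simp
qed

end
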